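(* Let $X$ be a complete separable metric space, let $E\subset X$ with $\mathcal{H}^n(E)<\infty$, and for each $m\in\mathbb{N}$ let $\nu_m$ be a finite Borel measure on $X$ with $\mathcal{H}^n|_E\ge\nu_1\ge\nu_2\ge\dots\ge0$ and $\|\nu_m\|\to0$. Then for $\mathcal{H}^n$-almost every $x\in X$, $$\lim_{m\to\infty}\lim_{r\to0}\frac{\nu_m(B(x,r))}{r^n}=0.$$
   Context: $\mathcal{H}^n$ is $n$-dimensional Hausdorff measure, $B(x,r)$ the closed ball, $\|\nu\|$ the total mass, and inequalities between measures are setwise. *)

theory Defs
  imports "HOL-Analysis.Analysis"
begin

text \<open>Normalising constant of n-dimensional Hausdorff measure: omega_n / 2^n times diam^n,
  with omega_n the volume of the unit ball in R^n.\<close>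
definition hausdorff_const :: "nat \<Rightarrow> real" where
  "hausdorff_const n = pi powr (real n / 2) / Gamma (real n / 2 + 1)"

definition hausdorff_pre :: "nat \<Rightarrow> real \<Rightarrow> 'a::metric_space set \<Rightarrow> ennreal" where
  "hausdorff_pre n \<delta> A =
     (INF C \<in> {C :: nat \<Rightarrow> 'a set. A \<subseteq> (\<Union>i. C i) \<and> (\<forall>i. bounded (C i) \<and> diameter (C i) \<le> \<delta>)}.
        (\<Sum>i. if C i = {} then 0
              else ennreal (hausdorff_const n * (diameter (C i) / 2) ^ n)))"

definition hausdorff :: "nat \<Rightarrow> 'a::metric_space set \<Rightarrow> ennreal" where
  "hausdorff n A = (SUP \<delta> \<in> {0<..}. hausdorff_pre n \<delta> A)"

end

theory Submission
  imports Defs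
begin

(* By the 5r-covering lemma, the set of points where the upper n-density of a finite Borel
   measure \<mu> exceeds t has Hausdorff measure at most hausdorff_const n * 5^n * \<parallel>\<mu>\<parallel> / t.
   The upper densities of the \<nu> m decrease in m, so a point where their limit is positive lies,
   for some k, in the set where every \<nu> m has upper density above 1/(k+1); that set has measure
   at most hausdorff_const n * 5^n * (k+1) * \<parallel>\<nu> m\<parallel> for every m, hence measure zero. *)

lemma cball_subset_cball_if_not_disjnt:
  fixes a b :: "'a::metric_space"
  assumes "\<not> disjnt (cball a r) (cball b s)" and "r \<le> 2 * s"
  shows "cball a r \<subseteq> cball b (5 * s)"
proof
  fix y assume y: "y \<in> cball a r"
  obtain z where z: "dist a z \<le> r" "dist b z \<le> s"
    using assms(1) by (auto simp: disjnt_def)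
  have "dist b y \<le> dist b z + dist z a + dist a y"
    by (metis dist_triangle add_right_mono order_trans)
  also have "\<dots> \<le> s + r + r"
    using y z by (simp add: dist_commute)
  finally show "y \<in> cball b (5 * s)"
    using assms(2) by simp
qed

lemma diameter_cball_le:
  fixes x :: "'a::metric_space"
  assumes "0 \<le> r"
  shows "diameter (cball x r) \<le> 2 * r"
proof -
  have "dist y z \<le> 2 * r" if "y \<in> cball x r" "z \<in> cball x r" for y z
    using that dist_triangle[of y z x] by (simp add: dist_commute)
  then show ?thesis
    using assms unfolding diameter_def by (auto intro!: cSUP_least)
qed

lemma ex_half_maximal:
  fixes r :: "'i \<Rightarrow> real"
  assumes "i \<in> L" and "bdd_above (r ` L)" and "\<And>l. l \<in> L \<Longrightarrow> 0 < r l"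
  obtains i0 where "i0 \<in> L" "\<And>l. l \<in> L \<Longrightarrow> r l \<le> 2 * r i0"
proof -
  have "(SUP l\<in>L. r l) / 2 < (SUP l\<in>L. r l)"
    using cSUP_upper[OF assms(1,2)] assms(3)[OF assms(1)] by linarith
  then obtain i0 where "i0 \<in> L" and i0: "(SUP l\<in>L. r l) / 2 < r i0"
    using less_cSUP_iff[OF _ assms(2)] assms(1) by blast
  moreover have "r l \<le> 2 * r i0" if "l \<in> L" for l
    using cSUP_upper[OF that assms(2)] i0 by linarith
  ultimately show thesis
    using that by blast
qed

lemma Vitali_covering_lemma_cballs_metric:
  fixes a :: "'i \<Rightarrow> 'a::metric_space"
  assumes radii: "\<And>i. i \<in> K \<Longrightarrow> 0 < r i \<and> r i \<le> B"
  obtains C where "C \<subseteq> K"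
    "pairwise (\<lambda>i j. disjnt (cball (a i) (r i)) (cball (a j) (r j))) C"
    "\<And>i. i \<in> K \<Longrightarrow> \<exists>j\<in>C. cball (a i) (r i) \<subseteq> cball (a j) (5 * r j)"
proof -
  define meets where "meets i j \<longleftrightarrow> \<not> disjnt (cball (a i) (r i)) (cball (a j) (r j))" for i j
  have meets_sym: "meets i j \<longleftrightarrow> meets j i" for i j
    by (auto simp: meets_def disjnt_sym)
  \<comment> \<open>Disjoint subfamilies in which every ball of K that meets the subfamily meets one of its
      balls of at least half its radius; a maximal one meets every ball of K.\<close>
  define \<Omega> where "\<Omega> = {C. C \<subseteq> K \<and> pairwise (\<lambda>i j. \<not> meets i j) C \<and>
     (\<forall>i\<in>K. (\<exists>j\<in>C. meets i j) \<longrightarrow> (\<exists>j\<in>C. meets i j \<and> r i \<le> 2 * r j))}"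
  have "\<exists>M\<in>\<Omega>. \<forall>X\<in>\<Omega>. M \<subseteq> X \<longrightarrow> X = M"
  proof (rule subset_Zorn')
    fix \<C> assume "subset.chain \<Omega> \<C>"
    then have "\<C> \<subseteq> \<Omega>" and "chain\<^sub>\<subseteq> \<C>"
      by (auto simp: subset_chain_def chain_subset_def)
    then show "\<Union>\<C> \<in> \<Omega>"
      unfolding \<Omega>_def by (auto intro!: pairwise_chain_Union) blast
  qed
  then obtain M where M: "M \<in> \<Omega>" and max: "\<And>X. X \<in> \<Omega> \<Longrightarrow> M \<subseteq> X \<Longrightarrow> X = M"
    by blast
  have M_meets: "\<exists>j\<in>M. meets i j" if "i \<in> K" for i
  proof (rule ccontr)
    assume none: "\<not> (\<exists>j\<in>M. meets i j)"
    define L where "L = {i\<in>K. \<forall>j\<in>M. \<not> meets i j}"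
    have "i \<in> L" using that none by (simp add: L_def)
    have "bdd_above (r ` L)"
      using radii by (auto simp: L_def intro!: bdd_aboveI2)
    then obtain i0 where "i0 \<in> L" and i0: "\<And>l. l \<in> L \<Longrightarrow> r l \<le> 2 * r i0"
      using ex_half_maximal[of i L r] \<open>i \<in> L\<close> radii unfolding L_def by blast
    have "insert i0 M \<in> \<Omega>"
      using M \<open>i0 \<in> L\<close> i0 unfolding \<Omega>_def L_def
      by (auto simp: pairwise_insert meets_sym)
    then have "i0 \<in> M"
      using max by blast
    moreover have "meets i0 i0"
      using radii[of i0] \<open>i0 \<in> L\<close> by (force simp: meets_def L_def disjnt_def)
    ultimately show False
      using \<open>i0 \<in> L\<close> by (auto simp: L_def)
  qed
  have "\<exists>j\<in>M. cball (a i) (r i) \<subseteq> cball (a j) (5 * r j)" if i: "i \<in> K" for i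
  proof -
    obtain j where "j \<in> M" "meets i j" "r i \<le> 2 * r j"
      using M M_meets[OF i] i by (auto simp: \<Omega>_def)
    then show ?thesis
      unfolding meets_def by (metis cball_subset_cball_if_not_disjnt)
  qed
  then show thesis
    using M by (intro that[of M]) (auto simp: \<Omega>_def meets_def)
qed

lemma countable_disjoint_cballs:
  fixes a :: "'i \<Rightarrow> 'a::{metric_space, second_countable_topology}"
  assumes disj: "pairwise (\<lambda>i j. disjnt (cball (a i) (r i)) (cball (a j) (r j))) C"
    and pos: "\<And>i. i \<in> C \<Longrightarrow> 0 < r i"
  shows "countable C"
proof (rule countable_image_inj_on)
  have "disjnt (ball (a i) (r i)) (ball (a j) (r j))" if "i \<in> C" "j \<in> C" "i \<noteq> j" for i j
    using disj that ball_subset_cball unfolding pairwise_def disjnt_def by blast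
  then show "countable ((\<lambda>i. ball (a i) (r i)) ` C)"
    by (intro countable_disjoint_open_subsets) (auto simp: pairwise_def)
  show "inj_on (\<lambda>i. ball (a i) (r i)) C"
  proof (rule inj_onI, rule ccontr)
    fix i j assume ij: "i \<in> C" "j \<in> C" "ball (a i) (r i) = ball (a j) (r j)" "i \<noteq> j"
    then have "a i \<in> cball (a i) (r i) \<inter> cball (a j) (r j)"
      using pos[of i] ball_subset_cball by (metis IntI centre_in_ball centre_in_cball less_imp_le subsetD)
    then show False
      using disj ij unfolding pairwise_def disjnt_def by blast
  qed
qed

lemma hausdorff_const_nonneg: "0 \<le> hausdorff_const n"
  unfolding hausdorff_const_def by (simp add: Gamma_real_pos less_imp_le)

definition hausdorff_gauge :: "nat \<Rightarrow> 'a::metric_space set \<Rightarrow> ennreal" where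
  "hausdorff_gauge n S = (if S = {} then 0 else ennreal (hausdorff_const n * (diameter S / 2) ^ n))"

lemma hausdorff_pre_eq_INF_gauge:
  "hausdorff_pre n \<delta> A =
     (INF C \<in> {C. A \<subseteq> (\<Union>i. C i) \<and> (\<forall>i. bounded (C i) \<and> diameter (C i) \<le> \<delta>)}.
        \<Sum>i. hausdorff_gauge n (C i))"
  by (simp add: hausdorff_pre_def hausdorff_gauge_def)

lemma hausdorff_pre_le_cover:
  assumes "A \<subseteq> (\<Union>i. C i)" and "\<And>i. bounded (C i) \<and> diameter (C i) \<le> \<delta>"
  shows "hausdorff_pre n \<delta> A \<le> (\<Sum>i. hausdorff_gauge n (C i))"
  unfolding hausdorff_pre_eq_INF_gauge by (rule INF_lower) (use assms in blast)

lemma hausdorff_gauge_cball_le: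
  fixes x :: "'a::metric_space"
  assumes "0 \<le> r"
  shows "hausdorff_gauge n (cball x r) \<le> ennreal (hausdorff_const n * r ^ n)"
proof -
  have "0 \<le> diameter (cball x r)"
    by (rule diameter_ge_0) simp
  moreover have "diameter (cball x r) \<le> 2 * r"
    by (rule diameter_cball_le[OF assms])
  ultimately have "0 \<le> diameter (cball x r) / 2" and "diameter (cball x r) / 2 \<le> r"
    by simp_all
  then show ?thesis
    unfolding hausdorff_gauge_def
    by (auto intro!: ennreal_leI mult_left_mono power_mono hausdorff_const_nonneg)
qed

lemma hausdorff_pre_le_nn_integral_cover:
  assumes I: "countable I" and cover: "A \<subseteq> (\<Union>i\<in>I. S i)" and "0 \<le> \<delta>"
    and S: "\<And>i. i \<in> I \<Longrightarrow> bounded (S i) \<and> diameter (S i) \<le> \<delta>"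
  shows "hausdorff_pre n \<delta> A \<le> (\<integral>\<^sup>+i. hausdorff_gauge n (S i) \<partial>count_space I)"
proof -
  \<comment> \<open>Unused indices get the empty set, which costs nothing.\<close>
  define C where "C k = (if k \<in> to_nat_on I ` I then S (from_nat_into I k) else {})" for k
  have "A \<subseteq> (\<Union>k. C k)"
    using cover I by (force simp: C_def)
  moreover have "bounded (C k) \<and> diameter (C k) \<le> \<delta>" for k
    using S \<open>0 \<le> \<delta>\<close> I by (auto simp: C_def)
  ultimately have "hausdorff_pre n \<delta> A \<le> (\<Sum>k. hausdorff_gauge n (C k))"
    by (rule hausdorff_pre_le_cover)
  also have "\<dots> = (\<integral>\<^sup>+k. hausdorff_gauge n (C k) \<partial>count_space UNIV)"
    by (simp add: nn_integral_count_space_nat)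
  also have "\<dots> = (\<integral>\<^sup>+k. hausdorff_gauge n (C k) \<partial>count_space (to_nat_on I ` I))"
    by (rule nn_integral_count_space_eq) (auto simp: C_def hausdorff_gauge_def)
  also have "\<dots> = (\<integral>\<^sup>+i. hausdorff_gauge n (C (to_nat_on I i)) \<partial>count_space I)"
    using inj_on_imp_bij_betw[OF inj_on_to_nat_on[OF I]] by (rule nn_integral_bij_count_space[symmetric])
  also have "\<dots> = (\<integral>\<^sup>+i. hausdorff_gauge n (S i) \<partial>count_space I)"
    using I by (intro nn_integral_cong) (simp add: C_def)
  finally show ?thesis .
qed

lemma suminf_ennreal_halves:
  assumes "0 \<le> e"
  shows "(\<Sum>k. ennreal (e / 2 ^ Suc k)) = ennreal e"
proof -
  have "(\<lambda>k. e / 2 ^ Suc k) sums e"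
    using sums_mult[OF power_half_series, of e] by (simp add: power_divide)
  then show ?thesis
    using assms by (simp add: suminf_ennreal2 sums_iff)
qed

lemma hausdorff_pre_UN_le:
  "hausdorff_pre n \<delta> (\<Union>k. A k) \<le> (\<Sum>k. hausdorff_pre n \<delta> (A k))"
proof (rule ennreal_le_epsilon)
  fix e :: real
  assume fin: "(\<Sum>k. hausdorff_pre n \<delta> (A k)) < top" and e: "0 < e"
  let ?e = "\<lambda>k. e / 2 ^ Suc k"
  have "\<exists>C. A k \<subseteq> (\<Union>i. C i) \<and> (\<forall>i. bounded (C i) \<and> diameter (C i) \<le> \<delta>) \<and>
            (\<Sum>i. hausdorff_gauge n (C i)) < hausdorff_pre n \<delta> (A k) + ennreal (?e k)" for k
  proof -
    have "hausdorff_pre n \<delta> (A k) < top"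
      using fin ennreal_suminf_lessD by blast
    then have "hausdorff_pre n \<delta> (A k) < hausdorff_pre n \<delta> (A k) + ennreal (?e k)"
      using ennreal_add_left_cancel_less[of _ 0] e by simp
    then show ?thesis
      unfolding hausdorff_pre_eq_INF_gauge[of n \<delta> "A k"] INF_less_iff by blast
  qed
  then obtain C where cover: "\<And>k. A k \<subseteq> (\<Union>i. C k i)"
    and small: "\<And>k i. bounded (C k i) \<and> diameter (C k i) \<le> \<delta>"
    and cost: "\<And>k. (\<Sum>i. hausdorff_gauge n (C k i)) < hausdorff_pre n \<delta> (A k) + ennreal (?e k)"
    by metis
  have "(\<Union>k. A k) \<subseteq> (\<Union>j. case_prod C (prod_decode j))"
  proof
    fix x assume "x \<in> (\<Union>k. A k)"
    then obtain k i where "x \<in> C k i"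
      using cover by blast
    then show "x \<in> (\<Union>j. case_prod C (prod_decode j))"
      by (intro UN_I[of "prod_encode (k, i)"]) auto
  qed
  then have "hausdorff_pre n \<delta> (\<Union>k. A k) \<le> (\<Sum>j. hausdorff_gauge n (case_prod C (prod_decode j)))"
    by (rule hausdorff_pre_le_cover) (auto simp: small split: prod.split)
  also have "\<dots> = (\<Sum>k. \<Sum>i. hausdorff_gauge n (C k i))"
    by (rule suminf_ennreal_2dimen) simp
  also have "\<dots> \<le> (\<Sum>k. hausdorff_pre n \<delta> (A k) + ennreal (?e k))"
    by (intro suminf_le less_imp_le cost) simp_all
  also have "\<dots> = (\<Sum>k. hausdorff_pre n \<delta> (A k)) + (\<Sum>k. ennreal (?e k))"
    by (rule suminf_add[symmetric]) simp_all
  also have "(\<Sum>k. ennreal (?e k)) = ennreal e"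
    using e by (intro suminf_ennreal_halves) simp
  finally show "hausdorff_pre n \<delta> (\<Union>k. A k) \<le> (\<Sum>k. hausdorff_pre n \<delta> (A k)) + ennreal e" .
qed

lemma hausdorff_pre_le_hausdorff: "0 < \<delta> \<Longrightarrow> hausdorff_pre n \<delta> A \<le> hausdorff n A"
  unfolding hausdorff_def by (rule SUP_upper) simp

lemma hausdorff_UN_le: "hausdorff n (\<Union>k. A k) \<le> (\<Sum>k. hausdorff n (A k))"
  unfolding hausdorff_def[of n "\<Union>k. A k"]
proof (rule SUP_least)
  fix \<delta> :: real assume "\<delta> \<in> {0<..}"
  then have "(\<Sum>k. hausdorff_pre n \<delta> (A k)) \<le> (\<Sum>k. hausdorff n (A k))"
    by (intro suminf_le hausdorff_pre_le_hausdorff) simp_all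
  then show "hausdorff_pre n \<delta> (\<Union>k. A k) \<le> (\<Sum>k. hausdorff n (A k))"
    using hausdorff_pre_UN_le order_trans by blast
qed

definition upper_density :: "nat \<Rightarrow> 'a::metric_space measure \<Rightarrow> 'a \<Rightarrow> ereal" where
  "upper_density n \<mu> x = Limsup (at_right 0) (\<lambda>r. ereal (measure \<mu> (cball x r) / r ^ n))"

lemma upper_density_nonneg: "0 \<le> upper_density n \<mu> x"
  unfolding upper_density_def
  by (intro le_Limsup) (auto intro: eventually_mono[OF eventually_at_right_less])

lemma upper_density_mono:
  assumes "finite_measure \<nu>" and le: "\<And>A. A \<in> sets borel \<Longrightarrow> emeasure \<mu> A \<le> emeasure \<nu> A"
  shows "upper_density n \<mu> x \<le> upper_density n \<nu> x"
  unfolding upper_density_def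
proof (intro Limsup_mono eventually_mono[OF eventually_at_right_less])
  fix r :: real assume "0 < r"
  have "measure \<mu> (cball x r) \<le> measure \<nu> (cball x r)"
    unfolding measure_def
    using le[of "cball x r"] finite_measure.emeasure_finite[OF assms(1)]
    by (intro enn2real_mono) (auto simp: top.not_eq_extremum)
  then show "ereal (measure \<mu> (cball x r) / r ^ n) \<le> ereal (measure \<nu> (cball x r) / r ^ n)"
    using \<open>0 < r\<close> by (simp add: divide_right_mono)
qed

lemma upper_density_gtE:
  assumes "ereal t < upper_density n \<mu> x" and "0 < \<delta>"
  obtains r where "0 < r" "r < \<delta>" "t * r ^ n < measure \<mu> (cball x r)"
proof -
  have "\<not> (\<forall>r. 0 < r \<longrightarrow> r < \<delta> \<longrightarrow> measure \<mu> (cball x r) \<le> t * r ^ n)"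
  proof
    assume "\<forall>r. 0 < r \<longrightarrow> r < \<delta> \<longrightarrow> measure \<mu> (cball x r) \<le> t * r ^ n"
    then have "\<forall>\<^sub>F r in at_right 0. ereal (measure \<mu> (cball x r) / r ^ n) \<le> ereal t"
      unfolding eventually_at_right_field using \<open>0 < \<delta>\<close> by (auto simp: divide_le_eq mult.commute)
    then have "upper_density n \<mu> x \<le> ereal t"
      unfolding upper_density_def by (rule Limsup_bounded)
    with assms(1) show False
      by simp
  qed
  then show thesis
    using that by (auto simp: not_le)
qed

lemma upper_density_gt_Vitali_cover:
  fixes \<mu> :: "'a::{metric_space, second_countable_topology} measure"
  assumes \<delta>: "0 < \<delta>" and dens: "\<And>x. x \<in> A \<Longrightarrow> ereal t < upper_density n \<mu> x"
  obtains D where "countable D"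
    "pairwise (\<lambda>i j. disjnt (cball (fst i) (snd i)) (cball (fst j) (snd j))) D"
    "\<And>j. j \<in> D \<Longrightarrow> 0 < snd j \<and> snd j \<le> \<delta> \<and> t * snd j ^ n < measure \<mu> (cball (fst j) (snd j))"
    "A \<subseteq> (\<Union>j\<in>D. cball (fst j) (5 * snd j))"
proof -
  define K where "K = {(x, r). x \<in> A \<and> 0 < r \<and> r \<le> \<delta> \<and> t * r ^ n < measure \<mu> (cball x r)}"
  have radii: "\<And>i. i \<in> K \<Longrightarrow> 0 < snd i \<and> snd i \<le> \<delta>"
    by (auto simp: K_def)
  obtain D where "D \<subseteq> K"
    and disj: "pairwise (\<lambda>i j. disjnt (cball (fst i) (snd i)) (cball (fst j) (snd j))) D"
    and enlarge: "\<And>i. i \<in> K \<Longrightarrow> \<exists>j\<in>D. cball (fst i) (snd i) \<subseteq> cball (fst j) (5 * snd j)"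
    using Vitali_covering_lemma_cballs_metric[of K snd \<delta> fst, OF radii] by blast
  then have D: "\<And>j. j \<in> D \<Longrightarrow> 0 < snd j \<and> snd j \<le> \<delta> \<and> t * snd j ^ n < measure \<mu> (cball (fst j) (snd j))"
    by (auto simp: K_def)
  have "A \<subseteq> (\<Union>j\<in>D. cball (fst j) (5 * snd j))"
  proof
    fix x assume "x \<in> A"
    then obtain r where r: "0 < r" "r < \<delta>" "t * r ^ n < measure \<mu> (cball x r)"
      using upper_density_gtE[OF dens[OF \<open>x \<in> A\<close>] \<delta>] by auto
    then have "(x, r) \<in> K"
      using \<open>x \<in> A\<close> by (simp add: K_def)
    then show "x \<in> (\<Union>j\<in>D. cball (fst j) (5 * snd j))"
      using enlarge[of "(x, r)"] r by fastforce
  qed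
  moreover have "countable D"
    using D by (intro countable_disjoint_cballs[OF disj]) blast
  ultimately show thesis
    using that disj D by blast
qed

lemma hausdorff_gauge_enlarged_cball_le:
  assumes "finite_measure \<mu>" and t: "0 < t" and "0 < r" and dens: "t * r ^ n < measure \<mu> (cball x r)"
  shows "hausdorff_gauge n (cball x (5 * r)) \<le> ennreal (hausdorff_const n * 5 ^ n / t) * emeasure \<mu> (cball x r)"
proof -
  define c where "c = hausdorff_const n * 5 ^ n / t"
  have "0 \<le> c"
    using t hausdorff_const_nonneg by (simp add: c_def)
  have "hausdorff_const n * (5 * r) ^ n = c * (t * r ^ n)"
    using t by (simp add: c_def power_mult_distrib)
  also have "\<dots> \<le> c * measure \<mu> (cball x r)"
    using dens \<open>0 \<le> c\<close> by (intro mult_left_mono) auto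
  finally have "ennreal (hausdorff_const n * (5 * r) ^ n) \<le> ennreal (c * measure \<mu> (cball x r))"
    by (rule ennreal_leI)
  with hausdorff_gauge_cball_le[of "5 * r" n x] \<open>0 < r\<close>
  have "hausdorff_gauge n (cball x (5 * r)) \<le> ennreal (c * measure \<mu> (cball x r))"
    by simp
  also have "\<dots> = ennreal c * emeasure \<mu> (cball x r)"
    using \<open>0 \<le> c\<close> assms(1) by (simp add: finite_measure.emeasure_eq_measure ennreal_mult')
  finally show ?thesis
    unfolding c_def .
qed

lemma hausdorff_le_of_upper_density_gt:
  fixes \<mu> :: "'a::{metric_space, second_countable_topology} measure"
  assumes sets: "sets \<mu> = sets borel" and fin: "finite_measure \<mu>" and t: "0 < t"
    and dens: "\<And>x. x \<in> A \<Longrightarrow> ereal t < upper_density n \<mu> x"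
  shows "hausdorff n A \<le> ennreal (hausdorff_const n * 5 ^ n / t) * emeasure \<mu> (space \<mu>)"
  unfolding hausdorff_def
proof (rule SUP_least)
  fix \<delta> :: real assume "\<delta> \<in> {0<..}"
  then have \<delta>: "0 < \<delta>" by simp
  let ?c = "ennreal (hausdorff_const n * 5 ^ n / t)"
  obtain D where "countable D"
    and disj: "pairwise (\<lambda>i j. disjnt (cball (fst i) (snd i)) (cball (fst j) (snd j))) D"
    and D: "\<And>j. j \<in> D \<Longrightarrow> 0 < snd j \<and> snd j \<le> \<delta> / 10 \<and> t * snd j ^ n < measure \<mu> (cball (fst j) (snd j))"
    and cover: "A \<subseteq> (\<Union>j\<in>D. cball (fst j) (5 * snd j))"
    by (rule upper_density_gt_Vitali_cover[of "\<delta> / 10" A t n \<mu>]) (use \<delta> dens in auto)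
  have "bounded (cball (fst j) (5 * snd j)) \<and> diameter (cball (fst j) (5 * snd j)) \<le> \<delta>"
    if "j \<in> D" for j
    using D[OF that] diameter_cball_le[of "5 * snd j" "fst j"] by simp
  with cover have "hausdorff_pre n \<delta> A \<le> (\<integral>\<^sup>+j. hausdorff_gauge n (cball (fst j) (5 * snd j)) \<partial>count_space D)"
    using \<open>countable D\<close> \<delta> by (intro hausdorff_pre_le_nn_integral_cover) auto
  also have "\<dots> \<le> (\<integral>\<^sup>+j. ?c * emeasure \<mu> (cball (fst j) (snd j)) \<partial>count_space D)"
    using D fin t by (intro nn_integral_mono hausdorff_gauge_enlarged_cball_le) auto
  also have "\<dots> = ?c * (\<integral>\<^sup>+j. emeasure \<mu> (cball (fst j) (snd j)) \<partial>count_space D)"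
    by (rule nn_integral_cmult) simp
  also have "\<dots> = ?c * emeasure \<mu> (\<Union>j\<in>D. cball (fst j) (snd j))"
    using emeasure_UN_countable[of D "\<lambda>j. cball (fst j) (snd j)" \<mu>] \<open>countable D\<close> sets disj
    by (simp add: disjoint_family_on_def pairwise_def disjnt_def)
  also have "\<dots> \<le> ?c * emeasure \<mu> (space \<mu>)"
    by (intro mult_left_mono emeasure_space) simp
  finally show "hausdorff_pre n \<delta> A \<le> ?c * emeasure \<mu> (space \<mu>)" .
qed

lemma decseq_ereal_tendsto_0I:
  fixes X :: "nat \<Rightarrow> ereal"
  assumes "decseq X" and "\<And>m. 0 \<le> X m" and small: "\<And>k. \<exists>m. X m \<le> ereal (1 / Suc k)"
  shows "X \<longlonglongrightarrow> 0"
proof -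
  have "(INF m. X m) \<le> ereal (1 / Suc k)" for k
    using small[of k] by (meson INF_lower2 UNIV_I)
  moreover have "(\<lambda>k. ereal (1 / Suc k)) \<longlonglongrightarrow> 0"
    using LIMSEQ_inverse_real_of_nat by (simp add: inverse_eq_divide zero_ereal_def)
  ultimately have "(INF m. X m) \<le> 0"
    by (intro LIMSEQ_le_const[where x = 0 and a = "INF m. X m"]) auto
  then have "(INF m. X m) = 0"
    using assms(2) by (intro antisym INF_greatest) auto
  then show ?thesis
    using LIMSEQ_INF[OF \<open>decseq X\<close>] by simp
qed

theorem lemma5p5:
  fixes E :: "'a::polish_space set"
    and n :: nat
    and \<nu> :: "nat \<Rightarrow> 'a measure"
  assumes HE: "hausdorff n E < \<infinity>"
    and borel: "\<And>m. sets (\<nu> m) = sets borel"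
    and finite: "\<And>m. finite_measure (\<nu> m)"
    and dom: "\<And>A. A \<in> sets borel \<Longrightarrow> emeasure (\<nu> 0) A \<le> hausdorff n (E \<inter> A)"
    and decr: "\<And>m A. A \<in> sets borel \<Longrightarrow> emeasure (\<nu> (Suc m)) A \<le> emeasure (\<nu> m) A"
    and mass: "(\<lambda>m. emeasure (\<nu> m) (space (\<nu> m))) \<longlonglongrightarrow> 0"
  shows "\<exists>N. hausdorff n N = 0 \<and>
           (\<forall>x. x \<notin> N \<longrightarrow>
              (\<lambda>m. Limsup (at_right (0::real))
                      (\<lambda>r. ereal (measure (\<nu> m) (cball x r) / r ^ n))) \<longlonglongrightarrow> 0)"
proof -
  define N where "N k = {x. \<forall>m. ereal (1 / Suc k) < upper_density n (\<nu> m) x}" for k :: nat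
  have "hausdorff n (N k) = 0" for k
  proof -
    let ?c = "ennreal (hausdorff_const n * 5 ^ n / (1 / Suc k))"
    have "hausdorff n (N k) \<le> ?c * emeasure (\<nu> m) (space (\<nu> m))" for m
      by (rule hausdorff_le_of_upper_density_gt[OF borel finite]) (auto simp: N_def)
    moreover have "(\<lambda>m. ?c * emeasure (\<nu> m) (space (\<nu> m))) \<longlonglongrightarrow> ?c * 0"
      by (intro ennreal_tendsto_cmult mass) simp
    ultimately have "hausdorff n (N k) \<le> 0"
      by (intro LIMSEQ_le_const[of "\<lambda>m. ?c * emeasure (\<nu> m) (space (\<nu> m))"]) auto
    then show ?thesis
      by simp
  qed
  then have "hausdorff n (\<Union>k. N k) = 0"
    using hausdorff_UN_le[of n N] by simp
  moreover have "(\<lambda>m. upper_density n (\<nu> m) x) \<longlonglongrightarrow> 0" if "x \<notin> (\<Union>k. N k)" for x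
  proof (rule decseq_ereal_tendsto_0I)
    show "decseq (\<lambda>m. upper_density n (\<nu> m) x)"
      using decr finite by (intro decseq_SucI upper_density_mono) auto
  qed (use that in \<open>auto simp: N_def upper_density_nonneg not_less\<close>)
  ultimately show ?thesis
    unfolding upper_density_def by blast
qed

end
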